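(* Let $R$ be a ring, $S=\mathrm{Spec}\,R$, $A$ a finite abelian group, and $\pi\colon X\to S$ a $D(A)$-cover all of whose line bundles $\mathcal{L}_\lambda$ are trivial, with chosen generators $v_\lambda$ of $\mathcal{L}_\lambda$ ($v_0=1$) so that $v_\lambda v_{\lambda'}=s_{\lambda,\lambda'}v_{\lambda+\lambda'}$ with $s_{\lambda,\lambda'}\in R$. Then $X$ is the spectrum of $$R[\{v_\lambda\}_{\lambda\in A}]/(\{v_\lambda v_{\lambda'}-s_{\lambda,\lambda'}v_{\lambda+\lambda'}\}_{\lambda,\lambda'\in A}),$$ and the discriminant ideal of $\pi$ is $$d(\pi)=\Big(|A|^{|A|}\prod_{\lambda\in A}s_{\lambda,-\lambda}\Big).$$
   Context: A $D(A)$-cover is a finite locally free $f\colon X\to S$ with an action of $D(A)=\mathrm{Spec}\,\mathcal{O}_S[A]$ such that fppf locally $f_*\mathcal{O}_X$ is the regular representation as a comodule; equivalently $f_*\mathcal{O}_X=\bigoplus_{\lambda\in A}\mathcal{L}_\lambda$ with line bundles $\mathcal{L}_\lambda$, $\mathcal{L}_0=\mathcal{O}_S$, and multiplication maps $\mathcal{L}_\lambda\otimes\mathcal{L}_{\lambda'}\to\mathcal{L}_{\lambda+\lambda'}$. The discriminant ideal $d(\pi)$ is the ideal generated by the determinant of the trace pairing $(x,y)\mapsto\mathrm{Tr}(xy)$ of the finite free algebra $\mathcal{O}_X$ over $R$ (locally, in general). *)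

theory Defs
  imports "HOL-Analysis.Determinants"
begin

text \<open>The algebra O_X = (+)_{l in A} R v_l of a D(A)-cover with trivialised line bundles is
  modelled as coefficient functions A => R (x = sum_l x(l) v_l), with multiplication determined
  by v_l v_l' = s l l' v_(l+l').\<close>

definition basis_vec :: "'g \<Rightarrow> 'g \<Rightarrow> 'r::comm_ring_1" where
  "basis_vec l = (\<lambda>m. if m = l then 1 else 0)"

definition cmult :: "('g::{finite,ab_group_add} \<Rightarrow> 'g \<Rightarrow> 'r::comm_ring_1)
     \<Rightarrow> ('g \<Rightarrow> 'r) \<Rightarrow> ('g \<Rightarrow> 'r) \<Rightarrow> ('g \<Rightarrow> 'r)" where
  "cmult s x y = (\<lambda>m. \<Sum>l\<in>UNIV. \<Sum>l'\<in>UNIV. if l + l' = m then x l * y l' * s l l' else 0)"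

definition alg_trace :: "('g::{finite,ab_group_add} \<Rightarrow> 'g \<Rightarrow> 'r::comm_ring_1)
     \<Rightarrow> ('g \<Rightarrow> 'r) \<Rightarrow> 'r" where
  "alg_trace s x = (\<Sum>k\<in>UNIV. cmult s x (basis_vec k) k)"

definition disc :: "('g::{finite,ab_group_add} \<Rightarrow> 'g \<Rightarrow> 'r::comm_ring_1) \<Rightarrow> 'r" where
  "disc s = det (\<chi> l m. alg_trace s (cmult s (basis_vec l) (basis_vec m)))"

definition principal_ideal :: "'r::comm_ring_1 \<Rightarrow> 'r set" where
  "principal_ideal d = {r * d | r. True}"

definition is_ring_hom :: "('r::comm_ring_1 \<Rightarrow> 'b::comm_ring_1) \<Rightarrow> bool" where
  "is_ring_hom f \<longleftrightarrow> f 1 = 1 \<and> (\<forall>a b. f (a + b) = f a + f b) \<and> (\<forall>a b. f (a * b) = f a * f b)"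

definition is_alg_hom :: "('g::{finite,ab_group_add} \<Rightarrow> 'g \<Rightarrow> 'r::comm_ring_1)
     \<Rightarrow> ('r \<Rightarrow> 'b::comm_ring_1) \<Rightarrow> (('g \<Rightarrow> 'r) \<Rightarrow> 'b) \<Rightarrow> bool" where
  "is_alg_hom s iota phi \<longleftrightarrow>
     phi (basis_vec 0) = 1 \<and>
     (\<forall>x y. phi (\<lambda>m. x m + y m) = phi x + phi y) \<and>
     (\<forall>x y. phi (cmult s x y) = phi x * phi y) \<and>
     (\<forall>r x. phi (\<lambda>m. r * x m) = iota r * phi x)"

end

theory Submission
  imports Defs
begin

text \<open>Since \<open>O_X\<close> is free on the \<open>v_\<lambda>\<close>, an algebra homomorphism out of it is the
  \<open>R\<close>-linear extension of its values on the basis, and that extension is multiplicative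
  exactly when the values satisfy the relations \<open>v_\<lambda> v_\<lambda>' = s_{\<lambda>,\<lambda>'} v_{\<lambda>+\<lambda>'}\<close>.
  Multiplication by \<open>v_\<lambda>\<close> shifts degrees by \<open>\<lambda>\<close>, so its trace vanishes for \<open>\<lambda> \<noteq> 0\<close>, while the
  unit axiom gives \<open>s_{0,\<lambda>} = 1\<close> and hence \<open>Tr(v_0) = |A|\<close>. The trace pairing matrix is
  therefore monomial, supported on \<open>\<lambda>' = -\<lambda>\<close> with entries \<open>|A| s_{\<lambda>,-\<lambda>}\<close>, and its determinant
  is \<open>|A|^|A| \<Prod> s_{\<lambda>,-\<lambda>}\<close> up to the sign of the permutation \<open>\<lambda> \<mapsto> -\<lambda>\<close>, a unit.\<close>

lemma cmult_apply:
  fixes s :: "'g::{finite,ab_group_add} \<Rightarrow> 'g \<Rightarrow> 'r::comm_ring_1"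
  shows "cmult s x y m = (\<Sum>l\<in>UNIV. x l * y (m - l) * s l (m - l))"
proof -
  have "(\<Sum>l'\<in>UNIV. if l + l' = m then x l * y l' * s l l' else 0)
      = x l * y (m - l) * s l (m - l)" for l
  proof -
    have "l + l' = m \<longleftrightarrow> l' = m - l" for l' by (auto simp: algebra_simps)
    then show ?thesis by simp
  qed
  then show ?thesis unfolding cmult_def by simp
qed

lemma cmult_basis_vec_right:
  fixes s :: "'g::{finite,ab_group_add} \<Rightarrow> 'g \<Rightarrow> 'r::comm_ring_1"
  shows "cmult s x (basis_vec k) m = x (m - k) * s (m - k) k"
proof -
  have "cmult s x (basis_vec k) m = (\<Sum>l\<in>UNIV. if l = m - k then x l * s l (m - l) else 0)"
    unfolding cmult_apply basis_vec_def by (intro sum.cong) (auto simp: algebra_simps)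
  then show ?thesis by simp
qed

lemma cmult_basis_vec:
  fixes s :: "'g::{finite,ab_group_add} \<Rightarrow> 'g \<Rightarrow> 'r::comm_ring_1"
  shows "cmult s (basis_vec l) (basis_vec m) k = (if k = l + m then s l m else 0)"
  unfolding cmult_basis_vec_right by (auto simp: basis_vec_def eq_diff_eq)

lemma alg_trace_eq:
  fixes s :: "'g::{finite,ab_group_add} \<Rightarrow> 'g \<Rightarrow> 'r::comm_ring_1"
  shows "alg_trace s x = x 0 * (\<Sum>k\<in>UNIV. s 0 k)"
  by (simp add: alg_trace_def cmult_basis_vec_right sum_distrib_left)

lemma cmult_unit_imp_s_zero_left:
  fixes s :: "'g::{finite,ab_group_add} \<Rightarrow> 'g \<Rightarrow> 'r::comm_ring_1"
  assumes "\<forall>x. cmult s (basis_vec 0) x = x"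
  shows "s 0 k = 1"
  using cmult_basis_vec[of s 0 k k] assms by (simp add: basis_vec_def)

lemma trace_pairing_basis_vec:
  fixes s :: "'g::{finite,ab_group_add} \<Rightarrow> 'g \<Rightarrow> 'r::comm_ring_1"
  assumes "\<forall>x. cmult s (basis_vec 0) x = x"
  shows "alg_trace s (cmult s (basis_vec l) (basis_vec m))
       = (if m = - l then of_nat CARD('g) * s l (- l) else 0)"
proof -
  have "0 = l + m \<longleftrightarrow> m = - l" by (metis neg_eq_iff_add_eq_0)
  then show ?thesis
    by (simp add: alg_trace_eq cmult_basis_vec cmult_unit_imp_s_zero_left[OF assms] mult.commute)
qed

lemma det_monomial:
  fixes c :: "'n::finite \<Rightarrow> 'r::comm_ring_1"
  assumes "p permutes UNIV"
  shows "det (\<chi> i j. if j = p i then c i else 0) = of_int (sign p) * prod c UNIV"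
proof -
  let ?A = "\<chi> i j. if j = p i then c i else 0"
  have "of_int (sign q) * (\<Prod>i\<in>UNIV. ?A $ i $ q i) = 0" if "q \<noteq> p" for q
  proof -
    from that obtain i where "q i \<noteq> p i" by blast
    then have "(\<Prod>i\<in>UNIV. ?A $ i $ q i) = 0" by (intro prod_zero) auto
    then show ?thesis by simp
  qed
  then have "det ?A = of_int (sign p) * (\<Prod>i\<in>UNIV. ?A $ i $ p i)"
    unfolding det_def using assms
    by (subst sum.remove[of _ p]) (auto intro: sum.neutral simp: finite_permutations)
  then show ?thesis by simp
qed

lemma principal_ideal_mult_unit:
  assumes "u dvd (1::'r::comm_ring_1)"
  shows "principal_ideal (u * d) = principal_ideal d"
proof -
  from assms obtain v where uv: "1 = u * v" by (rule dvdE)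
  have "r * (u * d) \<in> principal_ideal d" for r
    unfolding principal_ideal_def by (rule CollectI, rule exI[of _ "r * u"]) (simp add: mult.assoc)
  moreover have "r * d \<in> principal_ideal (u * d)" for r
  proof -
    have "r * d = (r * v) * (u * d)"
      by (simp add: mult_ac flip: uv)
    then show ?thesis unfolding principal_ideal_def by blast
  qed
  ultimately show ?thesis
    unfolding principal_ideal_def by blast
qed

lemma disc_eq:
  fixes s :: "'g::{finite,ab_group_add} \<Rightarrow> 'g \<Rightarrow> 'r::comm_ring_1"
  assumes "\<forall>x. cmult s (basis_vec 0) x = x"
  shows "disc s = of_int (sign (uminus :: 'g \<Rightarrow> 'g))
                  * (of_nat (CARD('g) ^ CARD('g)) * (\<Prod>l\<in>UNIV. s l (- l)))"
proof -
  have "uminus permutes (UNIV :: 'g set)"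
    by (auto simp: permutes_univ) (metis minus_minus)
  then have "disc s = of_int (sign (uminus :: 'g \<Rightarrow> 'g)) * (\<Prod>l\<in>UNIV. of_nat CARD('g) * s l (- l))"
    unfolding disc_def trace_pairing_basis_vec[OF assms] by (rule det_monomial)
  then show ?thesis by (simp add: prod.distrib)
qed

lemma ring_hom_zero:
  assumes "is_ring_hom f"
  shows "f 0 = 0"
proof -
  have "f (0 + 0) = f 0 + f 0" using assms unfolding is_ring_hom_def by blast
  then show ?thesis by simp
qed

lemma ring_hom_sum:
  assumes "is_ring_hom f"
  shows "f (\<Sum>x\<in>F. g x) = (\<Sum>x\<in>F. f (g x))"
  by (induction F rule: infinite_finite_induct)
    (use assms in \<open>simp_all add: ring_hom_zero is_ring_hom_def\<close>)

lemma alg_hom_add: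
  assumes "is_alg_hom s iota psi"
  shows "psi (\<lambda>m. x m + y m) = psi x + psi y"
  using assms unfolding is_alg_hom_def by blast

lemma alg_hom_scale:
  assumes "is_alg_hom s iota psi"
  shows "psi (\<lambda>m. r * x m) = iota r * psi x"
  using assms unfolding is_alg_hom_def by blast

lemma alg_hom_sum:
  assumes "is_alg_hom s iota psi"
  shows "psi (\<lambda>m. \<Sum>l\<in>F. f l m) = (\<Sum>l\<in>F. psi (f l))"
proof -
  have zero: "psi (\<lambda>m. 0) = 0"
    using alg_hom_add[OF assms, of "\<lambda>m. 0" "\<lambda>m. 0"] by simp
  show ?thesis
    by (induction F rule: infinite_finite_induct)
      (simp_all add: zero alg_hom_add[OF assms, of "f _"])
qed

definition basis_extension :: "('r::comm_ring_1 \<Rightarrow> 'b::comm_ring_1) \<Rightarrow> ('g::finite \<Rightarrow> 'b)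
     \<Rightarrow> ('g \<Rightarrow> 'r) \<Rightarrow> 'b" where
  "basis_extension iota w x = (\<Sum>l\<in>UNIV. iota (x l) * w l)"

lemma alg_hom_eq_basis_extension:
  fixes s :: "'g::{finite,ab_group_add} \<Rightarrow> 'g \<Rightarrow> 'r::comm_ring_1"
  assumes "is_alg_hom s iota psi"
  shows "psi = basis_extension iota (\<lambda>l. psi (basis_vec l))"
proof
  fix x :: "'g \<Rightarrow> 'r"
  have "x = (\<lambda>m. \<Sum>l\<in>UNIV. x l * basis_vec l m)"
    by (simp add: basis_vec_def if_distrib cong: if_cong)
  then have "psi x = psi (\<lambda>m. \<Sum>l\<in>UNIV. x l * basis_vec l m)"
    by (rule arg_cong)
  also have "\<dots> = (\<Sum>l\<in>UNIV. psi (\<lambda>m. x l * basis_vec l m))"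
    by (rule alg_hom_sum[OF assms])
  also have "\<dots> = (\<Sum>l\<in>UNIV. iota (x l) * psi (basis_vec l))"
    by (simp add: alg_hom_scale[OF assms])
  finally show "psi x = basis_extension iota (\<lambda>l. psi (basis_vec l)) x"
    unfolding basis_extension_def .
qed

lemma basis_extension_basis_vec:
  assumes "is_ring_hom iota"
  shows "basis_extension iota w (basis_vec l) = w l"
proof -
  have "basis_extension iota w (basis_vec l) = (\<Sum>m\<in>UNIV. if m = l then w l else 0)"
    unfolding basis_extension_def basis_vec_def
    using assms by (intro sum.cong) (auto simp: ring_hom_zero is_ring_hom_def)
  then show ?thesis by simp
qed

lemma basis_extension_cmult:
  fixes s :: "'g::{finite,ab_group_add} \<Rightarrow> 'g \<Rightarrow> 'r::comm_ring_1"
  assumes hom: "is_ring_hom iota"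
    and rel: "\<And>l l'. w l * w l' = iota (s l l') * w (l + l')"
  shows "basis_extension iota w (cmult s x y) = basis_extension iota w x * basis_extension iota w y"
proof -
  have mult: "iota (a * b) = iota a * iota b" for a b
    using hom unfolding is_ring_hom_def by blast
  have regroup: "(a * w l) * (b * w l') = a * b * iota (s l l') * w (l + l')" for a b l l'
    by (simp add: rel[symmetric] mult_ac)
  have "basis_extension iota w (cmult s x y) = (\<Sum>m\<in>UNIV. \<Sum>l\<in>UNIV. \<Sum>l'\<in>UNIV.
          if l + l' = m then iota (x l) * iota (y l') * iota (s l l') * w m else 0)"
    unfolding basis_extension_def cmult_def
    by (simp add: ring_hom_sum[OF hom] ring_hom_zero[OF hom] mult sum_distrib_right if_distrib
        cong: if_cong) (intro sum.cong refl; simp)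
  also have "\<dots> = (\<Sum>l\<in>UNIV. \<Sum>l'\<in>UNIV. \<Sum>m\<in>UNIV.
          if l + l' = m then iota (x l) * iota (y l') * iota (s l l') * w m else 0)"
    by (subst sum.swap, rule sum.cong[OF refl], rule sum.swap)
  also have "\<dots> = (\<Sum>l\<in>UNIV. \<Sum>l'\<in>UNIV. (iota (x l) * w l) * (iota (y l') * w l'))"
    by (intro sum.cong refl) (simp add: regroup)
  also have "\<dots> = basis_extension iota w x * basis_extension iota w y"
    unfolding basis_extension_def by (simp add: sum_product)
  finally show ?thesis .
qed

lemma is_alg_hom_basis_extension:
  fixes s :: "'g::{finite,ab_group_add} \<Rightarrow> 'g \<Rightarrow> 'r::comm_ring_1"
  assumes hom: "is_ring_hom iota" and w0: "w 0 = 1"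
    and rel: "\<And>l l'. w l * w l' = iota (s l l') * w (l + l')"
  shows "is_alg_hom s iota (basis_extension iota w)"
  unfolding is_alg_hom_def
proof (intro conjI allI)
  show "basis_extension iota w (basis_vec 0) = 1"
    by (simp add: basis_extension_basis_vec[OF hom] w0)
  show "basis_extension iota w (cmult s x y) = basis_extension iota w x * basis_extension iota w y"
    for x y using hom rel by (rule basis_extension_cmult)
  show "basis_extension iota w (\<lambda>m. x m + y m) = basis_extension iota w x + basis_extension iota w y"
    for x y using hom by (simp add: basis_extension_def is_ring_hom_def distrib_right sum.distrib)
  show "basis_extension iota w (\<lambda>m. r * x m) = iota r * basis_extension iota w x"
    for r x using hom by (simp add: basis_extension_def is_ring_hom_def sum_distrib_left mult_ac)
qed

lemma alg_hom_from_relations: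
  fixes s :: "'g::{finite,ab_group_add} \<Rightarrow> 'g \<Rightarrow> 'r::comm_ring_1"
  assumes hom: "is_ring_hom iota" and "w 0 = 1"
    and rel: "\<And>l l'. w l * w l' = iota (s l l') * w (l + l')"
  shows "\<exists>!phi. is_alg_hom s iota phi \<and> (\<forall>l. phi (basis_vec l) = w l)"
proof (rule ex1I)
  show "is_alg_hom s iota (basis_extension iota w) \<and> (\<forall>l. basis_extension iota w (basis_vec l) = w l)"
    using is_alg_hom_basis_extension[of iota w s] assms basis_extension_basis_vec[OF hom] by blast
next
  fix psi
  assume "is_alg_hom s iota psi \<and> (\<forall>l. psi (basis_vec l) = w l)"
  then show "psi = basis_extension iota w"
    using alg_hom_eq_basis_extension[of s iota psi] by simp
qed

theorem lemma2p27:
  fixes s :: "'g::{finite,ab_group_add} \<Rightarrow> 'g \<Rightarrow> 'r::comm_ring_1"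
  assumes comm: "\<forall>x y. cmult s x y = cmult s y x"
    and assoc: "\<forall>x y z. cmult s (cmult s x y) z = cmult s x (cmult s y z)"
    and unit: "\<forall>x. cmult s (basis_vec 0) x = x"
  shows "(\<forall>(iota :: 'r \<Rightarrow> 'b::comm_ring_1) (w :: 'g \<Rightarrow> 'b).
            is_ring_hom iota \<and> w 0 = 1 \<and> (\<forall>l l'. w l * w l' = iota (s l l') * w (l + l'))
            \<longrightarrow> (\<exists>!phi. is_alg_hom s iota phi \<and> (\<forall>l. phi (basis_vec l) = w l)))
         \<and> principal_ideal (disc s)
           = principal_ideal (of_nat (CARD('g) ^ CARD('g)) * (\<Prod>l\<in>UNIV. s l (- l)))"
proof (intro conjI allI impI)
  fix iota :: "'r \<Rightarrow> 'b::comm_ring_1" and w :: "'g \<Rightarrow> 'b"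
  assume "is_ring_hom iota \<and> w 0 = 1 \<and> (\<forall>l l'. w l * w l' = iota (s l l') * w (l + l'))"
  then show "\<exists>!phi. is_alg_hom s iota phi \<and> (\<forall>l. phi (basis_vec l) = w l)"
    using alg_hom_from_relations[of iota w s] by blast
next
  have "of_int (sign (uminus :: 'g \<Rightarrow> 'g)) dvd (1 :: 'r)"
    by (cases rule: sign_cases[of "uminus :: 'g \<Rightarrow> 'g"]) simp_all
  then show "principal_ideal (disc s)
           = principal_ideal (of_nat (CARD('g) ^ CARD('g)) * (\<Prod>l\<in>UNIV. s l (- l)))"
    unfolding disc_eq[OF unit] by (rule principal_ideal_mult_unit)
qed

end
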